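(* There exists $c>0$ such that the following holds. Let $t\geq 2$ be an integer and let $\omega:2^{[t]}\to\mathbb{R}_{\geq 0}$ be a balanced weight function with $\omega(2^{[t]})\geq 9/10$. Then either (i) $\omega(\emptyset)\geq 1/10$ and $\omega([t])\geq 1/10$, or (ii) there exist a positive integer $s$ and pairwise disjoint families $\mathcal{A}_1,\dots,\mathcal{A}_s\subset 2^{[t]}$ such that $\sum_{i=1}^s\omega(\mathcal{A}_i)^c\geq 1$, and for all $1\leq i<j\leq s$, every $A\in\mathcal{A}_i$ is incomparable (with respect to inclusion) to every $B\in\mathcal{A}_j$.
   Context: $2^{[t]}$ is the family of all subsets of $[t]=\{1,\dots,t\}$, ordered by inclusion. For a weight function $\omega:2^{[t]}\to\mathbb{R}_{\geq0}$ and $\mathcal{A}\subset 2^{[t]}$, $\omega(\mathcal{A})=\sum_{A\in\mathcal{A}}\omega(A)$. For $i\in[t]$ let $F^-_t(i)=\{A\subset[t]: i\notin A\}$ and $F^+_t(i)=\{A\subset[t]: i\in A\}$. $\omega$ is balanced if $\omega(F^-_t(i))\leq 1/2$ and $\omega(F^+_t(i))\leq 1/2$ for every $i\in[t]$. *)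

theory Defs
  imports Complex_Main
begin

definition wt :: "(nat set \<Rightarrow> real) \<Rightarrow> nat set set \<Rightarrow> real" where
  "wt \<omega> \<A> = (\<Sum>A\<in>\<A>. \<omega> A)"

definition Fminus :: "nat \<Rightarrow> nat \<Rightarrow> nat set set" where
  "Fminus t i = {A. A \<subseteq> {1..t} \<and> i \<notin> A}"

definition Fplus :: "nat \<Rightarrow> nat \<Rightarrow> nat set set" where
  "Fplus t i = {A. A \<subseteq> {1..t} \<and> i \<in> A}"

definition balanced :: "nat \<Rightarrow> (nat set \<Rightarrow> real) \<Rightarrow> bool" where
  "balanced t \<omega> \<longleftrightarrow> (\<forall>i\<in>{1..t}. wt \<omega> (Fminus t i) \<le> 1/2 \<and> wt \<omega> (Fplus t i) \<le> 1/2)"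

end

theory Submission
  imports Defs
begin

text \<open>Call a nonempty \<open>M \<subseteq> [t]\<close> deficient if the weight of the sets avoiding \<open>M\<close>,
  or of the sets containing \<open>M\<close>, is below the threshold \<open>\<theta>(|M|) = 1/10 + 3/(10|M|)\<close>.
  Balance makes every singleton non-deficient, while \<open>[t]\<close> itself is deficient unless
  alternative (i) holds. Take a deficient \<open>M\<close> of minimum size \<open>m \<ge> 2\<close>, say with the
  avoiding weight too small. For \<open>x \<in> M\<close> the sets avoiding \<open>M - {x}\<close> are those avoiding
  \<open>M\<close> plus those meeting \<open>M\<close> exactly in \<open>{x}\<close>; since \<open>M - {x}\<close> is not deficient,
  the latter family has weight at least \<open>\<theta>(m-1) - \<theta>(m) \<ge> m\<^sup>-\<^sup>4\<close>. These \<open>m\<close>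
  families are mutually incomparable, and the sum of the fourth roots of their weights is
  at least \<open>1\<close>. The containing case is symmetric, with the traces \<open>M - {x}\<close> in place
  of \<open>{x}\<close>.\<close>

definition with_trace :: "'a set \<Rightarrow> 'a set \<Rightarrow> 'a set \<Rightarrow> 'a set set" where
  "with_trace T M Q = {A \<in> Pow T. A \<inter> M = Q}"

definition threshold :: "nat \<Rightarrow> real" where
  "threshold k = 1/10 + 3 / (10 * real k)"

definition deficient :: "nat \<Rightarrow> (nat set \<Rightarrow> real) \<Rightarrow> nat set \<Rightarrow> bool" where
  "deficient t \<omega> M \<longleftrightarrow> M \<subseteq> {1..t} \<and> M \<noteq> {} \<and>
     (wt \<omega> (with_trace {1..t} M {}) < threshold (card M) \<or>
      wt \<omega> (with_trace {1..t} M M) < threshold (card M))"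

definition incomparable_families :: "nat \<Rightarrow> (nat set \<Rightarrow> real) \<Rightarrow> real \<Rightarrow> bool" where
  "incomparable_families t \<omega> c \<longleftrightarrow>
     (\<exists>(s::nat) (\<A>::nat \<Rightarrow> nat set set). s \<ge> 1 \<and>
        (\<forall>i\<in>{1..s}. \<A> i \<subseteq> Pow {1..t}) \<and>
        (\<forall>i\<in>{1..s}. \<forall>j\<in>{1..s}. i \<noteq> j \<longrightarrow> \<A> i \<inter> \<A> j = {}) \<and>
        (\<Sum>i=1..s. wt \<omega> (\<A> i) powr c) \<ge> 1 \<and>
        (\<forall>i\<in>{1..s}. \<forall>j\<in>{1..s}. i < j \<longrightarrow>
           (\<forall>A\<in>\<A> i. \<forall>B\<in>\<A> j. \<not> A \<subseteq> B \<and> \<not> B \<subseteq> A)))"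

lemma wt_union_disjoint:
  "finite \<A> \<Longrightarrow> finite \<B> \<Longrightarrow> \<A> \<inter> \<B> = {} \<Longrightarrow> wt \<omega> (\<A> \<union> \<B>) = wt \<omega> \<A> + wt \<omega> \<B>"
  unfolding wt_def by (rule sum.union_disjoint)

lemma finite_with_trace: "finite T \<Longrightarrow> finite (with_trace T M Q)"
  unfolding with_trace_def by simp

lemma with_trace_disjoint: "Q \<noteq> Q' \<Longrightarrow> with_trace T M Q \<inter> with_trace T M Q' = {}"
  unfolding with_trace_def by auto

lemma with_trace_subset_imp_subset:
  "A \<in> with_trace T M Q \<Longrightarrow> B \<in> with_trace T M Q' \<Longrightarrow> A \<subseteq> B \<Longrightarrow> Q \<subseteq> Q'"
  unfolding with_trace_def by auto

lemma with_trace_remove: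
  assumes "x \<notin> Q"
  shows "with_trace T (M - {x}) Q = with_trace T M Q \<union> with_trace T M (insert x Q)"
  using assms unfolding with_trace_def by auto

lemma wt_with_trace_remove:
  assumes "finite T" "x \<notin> Q"
  shows "wt \<omega> (with_trace T (M - {x}) Q) = wt \<omega> (with_trace T M Q) + wt \<omega> (with_trace T M (insert x Q))"
  unfolding with_trace_remove[OF assms(2)] using assms
  by (intro wt_union_disjoint finite_with_trace with_trace_disjoint) auto

lemma wt_singleton_traces_ge:
  assumes "balanced t \<omega>" "wt \<omega> (Pow {1..t}) \<ge> 9/10" "y \<in> {1..t}"
  shows "wt \<omega> (with_trace {1..t} {y} {}) \<ge> 2/5" "wt \<omega> (with_trace {1..t} {y} {y}) \<ge> 2/5"
proof -
  have minus: "with_trace {1..t} {y} {} = Fminus t y"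
    and plus: "with_trace {1..t} {y} {y} = Fplus t y"
    unfolding with_trace_def Fminus_def Fplus_def by auto
  have "Pow {1..t} = with_trace {1..t} {y} {} \<union> with_trace {1..t} {y} {y}"
    unfolding with_trace_def by auto
  then have "wt \<omega> (Pow {1..t}) = wt \<omega> (with_trace {1..t} {y} {}) + wt \<omega> (with_trace {1..t} {y} {y})"
    by (simp add: wt_union_disjoint finite_with_trace with_trace_disjoint)
  moreover have "wt \<omega> (Fminus t y) \<le> 1/2" "wt \<omega> (Fplus t y) \<le> 1/2"
    using assms(1,3) unfolding balanced_def by auto
  ultimately show "wt \<omega> (with_trace {1..t} {y} {}) \<ge> 2/5" "wt \<omega> (with_trace {1..t} {y} {y}) \<ge> 2/5"
    using assms(2) unfolding minus plus by linarith+
qed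

lemma le_powr_inverse_if_pow_le:
  fixes x w :: real
  assumes "x \<ge> 0" "n > 0" "x ^ n \<le> w"
  shows "x \<le> w powr (1 / n)"
proof -
  have "x = (x ^ n) powr (1 / n)"
  proof (cases "x = 0")
    case False
    then show ?thesis using assms(1,2) by (simp flip: powr_realpow add: powr_powr)
  qed (use assms(2) in simp)
  also have "\<dots> \<le> w powr (1 / n)"
    using assms by (intro powr_mono2) auto
  finally show ?thesis .
qed

lemma threshold_gap_ge:
  assumes "m \<ge> 2"
  shows "(1 / real m) ^ 4 \<le> threshold (m - 1) - threshold m"
proof -
  have m: "real m \<ge> 2" using assms by simp
  have gap: "threshold (m - 1) - threshold m = 3 / (10 * real m * (real m - 1))"
    using assms unfolding threshold_def by (simp add: of_nat_diff field_simps)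
  have "10 * real m * (real m - 1) \<le> 3 * real m ^ 4"
  proof -
    have "10 * real m * (real m - 1) \<le> 10 * real m ^ 2" using m by (simp add: power2_eq_square algebra_simps)
    also have "\<dots> \<le> 3 * (4 * real m ^ 2)" by simp
    also have "\<dots> \<le> 3 * (real m ^ 2 * real m ^ 2)"
      using power_mono[OF m, of 2] by (intro mult_left_mono mult_right_mono) auto
    finally show ?thesis by (simp add: power_add [symmetric])
  qed
  moreover have "0 < 10 * real m * (real m - 1)" using m by simp
  ultimately show ?thesis unfolding gap power_divide by (simp add: divide_simps)
qed

lemma incomparable_families_if_trace_antichain:
  assumes "finite M" "M \<noteq> {}"
    and antichain: "\<And>x y. x \<in> M \<Longrightarrow> y \<in> M \<Longrightarrow> P x \<subseteq> P y \<Longrightarrow> x = y"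
    and "(\<Sum>x\<in>M. wt \<omega> (with_trace {1..t} M (P x)) powr c) \<ge> 1"
  shows "incomparable_families t \<omega> c"
proof -
  obtain e where e: "bij_betw e {1..card M} M"
    using ex_bij_betw_nat_finite_1[OF \<open>finite M\<close>] by blast
  have e_in: "e i \<in> M" if "i \<in> {1..card M}" for i
    using e that by (auto simp: bij_betw_def)
  have not_subset: "\<not> P (e i) \<subseteq> P (e j)"
    if "i \<in> {1..card M}" "j \<in> {1..card M}" "i \<noteq> j" for i j
    using antichain[OF e_in[OF that(1)] e_in[OF that(2)]] inj_onD[OF bij_betw_imp_inj_on[OF e]] that
    by blast
  define \<A> where "\<A> i = with_trace {1..t} M (P (e i))" for i
  have incomparable: "\<not> A \<subseteq> B"
    if "i \<in> {1..card M}" "j \<in> {1..card M}" "i \<noteq> j" "A \<in> \<A> i" "B \<in> \<A> j" for i j A B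
    using with_trace_subset_imp_subset[OF that(4,5)[unfolded \<A>_def]] not_subset[OF that(1-3)]
    by blast
  have disjoint: "\<A> i \<inter> \<A> j = {}"
    if "i \<in> {1..card M}" "j \<in> {1..card M}" "i \<noteq> j" for i j
  proof -
    have "P (e i) \<noteq> P (e j)" using not_subset[OF that] by blast
    then show ?thesis unfolding \<A>_def by (rule with_trace_disjoint)
  qed
  have "(\<Sum>i=1..card M. wt \<omega> (\<A> i) powr c) = (\<Sum>x\<in>M. wt \<omega> (with_trace {1..t} M (P x)) powr c)"
    unfolding \<A>_def by (rule sum.reindex_bij_betw[OF e])
  then have "(\<Sum>i=1..card M. wt \<omega> (\<A> i) powr c) \<ge> 1" using assms(4) by simp
  moreover have "card M \<ge> 1" using assms(1,2) by (simp add: Suc_le_eq card_gt_0_iff)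
  moreover have "\<A> i \<subseteq> Pow {1..t}" for i unfolding \<A>_def with_trace_def by blast
  ultimately show ?thesis
    unfolding incomparable_families_def
    by (intro exI[of _ "card M"] exI[of _ \<A>] conjI ballI impI disjoint incomparable) auto
qed

lemma incomparable_families_if_threshold_drop:
  assumes "finite M" "card M \<ge> 2"
    and antichain: "\<And>x y. x \<in> M \<Longrightarrow> y \<in> M \<Longrightarrow> P x \<subseteq> P y \<Longrightarrow> x = y"
    and drop: "\<And>x. x \<in> M \<Longrightarrow>
      threshold (card M - 1) - threshold (card M) \<le> wt \<omega> (with_trace {1..t} M (P x))"
  shows "incomparable_families t \<omega> (1/4)"
proof (rule incomparable_families_if_trace_antichain[OF assms(1) _ antichain])
  show "M \<noteq> {}" using assms(2) by auto
  have "1 / real (card M) \<le> wt \<omega> (with_trace {1..t} M (P x)) powr (1/4)" if "x \<in> M" for x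
    using le_powr_inverse_if_pow_le[of "1 / real (card M)" 4] threshold_gap_ge[OF assms(2)] drop[OF that]
    by simp
  then have "(\<Sum>x\<in>M. 1 / real (card M)) \<le> (\<Sum>x\<in>M. wt \<omega> (with_trace {1..t} M (P x)) powr (1/4))"
    by (rule sum_mono)
  then show "(\<Sum>x\<in>M. wt \<omega> (with_trace {1..t} M (P x)) powr (1/4)) \<ge> 1"
    using assms(2) by simp
qed

lemma minimal_deficient_imp_incomparable_families:
  assumes "balanced t \<omega>" "wt \<omega> (Pow {1..t}) \<ge> 9/10" "deficient t \<omega> M"
    and minimal: "\<And>N. deficient t \<omega> N \<Longrightarrow> card M \<le> card N"
  shows "incomparable_families t \<omega> (1/4)"
proof -
  have M: "M \<subseteq> {1..t}" "M \<noteq> {}" "finite M"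
    using assms(3) finite_subset unfolding deficient_def by auto
  have "card M \<noteq> 1"
  proof
    assume "card M = 1"
    then obtain y where "M = {y}" by (rule card_1_singletonE)
    moreover from this have "y \<in> {1..t}" using M(1) by simp
    ultimately show False
      using assms(3) wt_singleton_traces_ge[OF assms(1,2)] unfolding deficient_def threshold_def
      by force
  qed
  moreover have "card M \<noteq> 0" using M(2,3) by simp
  ultimately have m: "card M \<ge> 2" by linarith
  have punctured_ge: "threshold (card M - 1) \<le> wt \<omega> (with_trace {1..t} (M - {x}) {})"
    "threshold (card M - 1) \<le> wt \<omega> (with_trace {1..t} (M - {x}) (M - {x}))" if "x \<in> M" for x
  proof -
    have "\<not> deficient t \<omega> (M - {x})"
      using minimal[of "M - {x}"] card_Diff1_less[OF M(3) that] by linarith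
    moreover have card: "card (M - {x}) = card M - 1" using M(3) that by simp
    moreover have "M - {x} \<noteq> {}"
    proof
      assume "M - {x} = {}"
      with card m show False by simp
    qed
    ultimately show "threshold (card M - 1) \<le> wt \<omega> (with_trace {1..t} (M - {x}) {})"
      "threshold (card M - 1) \<le> wt \<omega> (with_trace {1..t} (M - {x}) (M - {x}))"
      using M(1) unfolding deficient_def by auto
  qed
  from assms(3) consider
      "wt \<omega> (with_trace {1..t} M {}) < threshold (card M)"
    | "wt \<omega> (with_trace {1..t} M M) < threshold (card M)"
    unfolding deficient_def by blast
  then show ?thesis
  proof cases
    case 1
    show ?thesis
    proof (rule incomparable_families_if_threshold_drop[OF M(3) m, where P = "\<lambda>x. {x}"])
      fix x assume "x \<in> M"
      then show "threshold (card M - 1) - threshold (card M) \<le> wt \<omega> (with_trace {1..t} M {x})"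
        using punctured_ge(1)[OF \<open>x \<in> M\<close>] wt_with_trace_remove[of "{1..t}" x "{}" \<omega> M] 1 by simp
    qed simp
  next
    case 2
    show ?thesis
    proof (rule incomparable_families_if_threshold_drop[OF M(3) m, where P = "\<lambda>x. M - {x}"])
      fix x assume "x \<in> M"
      then show "threshold (card M - 1) - threshold (card M) \<le> wt \<omega> (with_trace {1..t} M (M - {x}))"
        using punctured_ge(2)[OF \<open>x \<in> M\<close>] wt_with_trace_remove[of "{1..t}" x "M - {x}" \<omega> M] 2
        by (simp add: insert_absorb)
    qed blast
  qed
qed

lemma balanced_dichotomy:
  assumes "t \<ge> 1" "balanced t \<omega>" "wt \<omega> (Pow {1..t}) \<ge> 9/10"
  shows "(\<omega> {} \<ge> 1/10 \<and> \<omega> {1..t} \<ge> 1/10) \<or> incomparable_families t \<omega> (1/4)"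
proof (cases "\<omega> {} \<ge> 1/10 \<and> \<omega> {1..t} \<ge> 1/10")
  case False
  moreover have "with_trace {1..t} {1..t} {} = {{}}" "with_trace {1..t} {1..t} {1..t} = {{1..t}}"
    unfolding with_trace_def by auto
  moreover have "threshold t \<ge> 1/10" unfolding threshold_def by simp
  ultimately have "deficient t \<omega> {1..t}"
    using assms(1) unfolding deficient_def by (auto simp: wt_def)
  then obtain M where "deficient t \<omega> M" "\<And>N. deficient t \<omega> N \<Longrightarrow> card M \<le> card N"
    using ex_has_least_nat[of "deficient t \<omega>" _ card] by metis
  then show ?thesis
    using minimal_deficient_imp_incomparable_families assms(2,3) by blast
qed simp

theorem lemma4p2:
  "\<exists>c::real. c > 0 \<and>
    (\<forall>(t::nat) (\<omega>::nat set \<Rightarrow> real).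
      t \<ge> 2 \<longrightarrow> (\<forall>A\<in>Pow {1..t}. \<omega> A \<ge> 0) \<longrightarrow> balanced t \<omega> \<longrightarrow>
      wt \<omega> (Pow {1..t}) \<ge> 9/10 \<longrightarrow>
      ((\<omega> {} \<ge> 1/10 \<and> \<omega> {1..t} \<ge> 1/10) \<or>
       (\<exists>(s::nat) (\<A>::nat \<Rightarrow> nat set set). s \<ge> 1 \<and>
          (\<forall>i\<in>{1..s}. \<A> i \<subseteq> Pow {1..t}) \<and>
          (\<forall>i\<in>{1..s}. \<forall>j\<in>{1..s}. i \<noteq> j \<longrightarrow> \<A> i \<inter> \<A> j = {}) \<and>
          (\<Sum>i=1..s. wt \<omega> (\<A> i) powr c) \<ge> 1 \<and>
          (\<forall>i\<in>{1..s}. \<forall>j\<in>{1..s}. i < j \<longrightarrow>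
             (\<forall>A\<in>\<A> i. \<forall>B\<in>\<A> j. \<not> A \<subseteq> B \<and> \<not> B \<subseteq> A)))))"
proof (rule exI[of _ "1/4"], fold incomparable_families_def, intro conjI allI impI)
  fix t :: nat and \<omega> :: "nat set \<Rightarrow> real"
  assume "t \<ge> 2" "\<forall>A\<in>Pow {1..t}. \<omega> A \<ge> 0" "balanced t \<omega>" "wt \<omega> (Pow {1..t}) \<ge> 9/10"
  then show "(\<omega> {} \<ge> 1/10 \<and> \<omega> {1..t} \<ge> 1/10) \<or> incomparable_families t \<omega> (1/4)"
    by (intro balanced_dichotomy) auto
qed simp

end
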